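(* Let $f(z)=\sum_{k\ge0}a_kz^k$ be an analytic function that is not a polynomial, with radius of convergence $R\in(0,\infty]$, and let $a_{n_0}$ be its first nonzero coefficient. Then the optimal radii $r_*(n)$ satisfy $r_*(n)\le r_*(n+1)$ for all $n>n_0$, and $\lim_{n\to\infty}r_*(n)=R$. Furthermore: if $r_*(n)=R$ then $R<\infty$, $\|f\|_{H^1(D_R)}<\infty$ and $\nu<\infty$; and if $R<\infty$, $\|f\|_{H^1(D_R)}<\infty$ and $\nu<n$, then $r_*(n)=R$.
   Context: $M_1(r)=\frac{1}{2\pi}\int_0^{2\pi}|f(re^{i\theta})|\,d\theta$ for $0<r<R$; if $R<\infty$ set $M_1(R)=\|f\|_{H^1(D_R)}=\lim_{r\to R}M_1(r)\in(0,\infty]$. For $n>n_0$ the optimal radius $r_*(n)$ is the smallest minimizer of $r\mapsto r^{-n}M_1(r)$ over $0<r\le R$ (over $0<r<\infty$ if $R=\infty$); such minimizers exist. With $\sigma(r)=\log M_1(r)$, $\nu=\sup_{0<r<R}r\sigma'(r)=\lim_{r\to R}r\sigma'(r)\in(0,\infty]$. *)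

theory Defs
  imports "HOL-Analysis.Analysis"
begin

definition pser :: "(nat \<Rightarrow> complex) \<Rightarrow> complex \<Rightarrow> complex" where
  "pser a z = (\<Sum>k. a k * z ^ k)"

definition M1 :: "(nat \<Rightarrow> complex) \<Rightarrow> real \<Rightarrow> real" where
  "M1 a r = (1 / (2 * pi)) * integral {0..2*pi} (\<lambda>\<theta>. norm (pser a (complex_of_real r * cis \<theta>)))"

text \<open>Hardy norm on the boundary disc: M_1(R) = lim_{r \<rightarrow> R-} M_1(r) (in the extended reals);
  only meaningful when R is finite.\<close>
definition H1norm :: "(nat \<Rightarrow> complex) \<Rightarrow> ereal" where
  "H1norm a = Lim (at_left (real_of_ereal (conv_radius a))) (\<lambda>r. ereal (M1 a r))"

definition radii :: "(nat \<Rightarrow> complex) \<Rightarrow> real set" where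
  "radii a = {r. 0 < r \<and> ereal r \<le> conv_radius a}"

definition objective :: "(nat \<Rightarrow> complex) \<Rightarrow> nat \<Rightarrow> real \<Rightarrow> ereal" where
  "objective a n r =
     (if ereal r < conv_radius a then ereal (M1 a r / r ^ n)
      else H1norm a / ereal (r ^ n))"

definition opt_radius :: "(nat \<Rightarrow> complex) \<Rightarrow> nat \<Rightarrow> real" where
  "opt_radius a n = (THE r. r \<in> radii a \<and> (\<forall>s\<in>radii a. objective a n r \<le> objective a n s)
       \<and> (\<forall>s\<in>radii a. objective a n s = objective a n r \<longrightarrow> r \<le> s))"

definition sigma :: "(nat \<Rightarrow> complex) \<Rightarrow> real \<Rightarrow> real" where
  "sigma a r = ln (M1 a r)"

definition nu :: "(nat \<Rightarrow> complex) \<Rightarrow> ereal" where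
  "nu a = (SUP r\<in>{r. 0 < r \<and> ereal r < conv_radius a}. ereal (r * deriv (sigma a) r))"

end

theory Submission
  imports Defs "HOL-Complex_Analysis.Complex_Analysis"
begin

text \<open>
  Two properties of \<open>M\<^sub>1\<close> drive the argument. The first is the Cauchy estimate
  \<open>\<bar>a\<^sub>k\<bar> r\<^sup>k \<le> M\<^sub>1(r)\<close>. The second is a maximum principle: for a continuous weight \<open>\<phi>\<close> with
  \<open>\<bar>\<phi>\<bar> \<le> 1\<close>, the weighted mean \<open>F(z) = (1/2\<pi>) \<integral> f(z e\<^sup>i\<^sup>\<theta>) \<phi>(\<theta>) d\<theta>\<close> is holomorphic with
  \<open>\<bar>F(z)\<bar> \<le> M\<^sub>1(\<bar>z\<bar>)\<close>, and choosing \<open>\<phi>\<close> close to the conjugate sign of \<open>f\<close> on \<open>\<bar>z\<bar> = \<rho>\<close> makes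
  \<open>\<bar>F(\<rho>)\<bar>\<close> close to \<open>M\<^sub>1(\<rho>)\<close>. On discs and annuli this shows that \<open>M\<^sub>1\<close> is non-decreasing and
  that \<open>M\<^sub>1\<^sup>q / r\<^sup>p\<close> has no strict interior maximum.

  The objective for \<open>n + 1\<close> is the one for \<open>n\<close> divided by \<open>r\<close>, which forces \<open>r\<^sub>*(n) \<le> r\<^sub>*(n+1)\<close>, and
  the Cauchy estimate pushes \<open>r\<^sub>*(n)\<close> beyond every \<open>r\<^sub>0 < R\<close>. If \<open>r\<^sub>*(n) = R\<close>, the objective at
  \<open>R\<close> is finite, and a value \<open>r\<sigma>'(r) > n\<close> would give a fraction \<open>n < p/q < r\<sigma>'(r)\<close> for which
  \<open>M\<^sub>1\<^sup>q / r\<^sup>p\<close> has a strict interior maximum. Conversely, if \<open>\<nu> < n\<close>, then \<open>r\<^sup>-\<^sup>n M\<^sub>1(r)\<close> strictly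
  decreases just to the right of any interior point (where \<open>f\<close> has no zeros, so \<open>M\<^sub>1\<close> is
  differentiable), so no interior point is the minimiser.
\<close>

lemma has_integral_cis_int:
  fixes m :: int
  shows "((\<lambda>\<theta>. cis (of_int m * \<theta>)) has_integral (if m = 0 then 2*pi else 0)) {0..2*pi}"
proof (cases "m = 0")
  case True
  then show ?thesis using has_integral_const_real[of "1::complex" 0 "2*pi"] by (simp add: scaleR_conv_of_real)
next
  case False
  have "((\<lambda>x. exp ((\<i> * of_int m) * of_real x) / (\<i> * of_int m)) has_vector_derivative
      exp ((\<i> * of_int m) * of_real t)) (at t within {0..2*pi})" for t
    using False
    by (intro derivative_eq_intros has_complex_derivative_imp_has_vector_derivative [unfolded o_def] | simp)+
  then have "((\<lambda>t. exp ((\<i> * of_int m) * of_real t)) has_integral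
      exp ((\<i> * of_int m) * of_real (2*pi)) / (\<i> * of_int m) - exp ((\<i> * of_int m) * of_real 0) / (\<i> * of_int m)) {0..2*pi}"
    by (intro fundamental_theorem_of_calculus) auto
  moreover have "exp ((\<i> * of_int m) * of_real (2*pi)) = 1"
    using exp_integer_2pi[of "of_int m"] by (simp add: algebra_simps)
  ultimately show ?thesis using False
    by (simp add: cis_conv_exp algebra_simps)
qed

lemma integral_periodic_shift:
  fixes h :: "real \<Rightarrow> real"
  assumes cont: "continuous_on UNIV h" and per: "\<And>x. h (x + 2*pi) = h x"
    and \<beta>: "0 \<le> \<beta>" "\<beta> \<le> 2*pi"
  shows "integral {0..2*pi} (\<lambda>\<theta>. h (\<theta> + \<beta>)) = integral {0..2*pi} h"
proof -
  have int: "\<And>u v. h integrable_on {u..v}"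
    by (intro integrable_continuous_real continuous_on_subset[OF cont]) auto
  have "integral {0..2*pi} (\<lambda>\<theta>. h (\<theta> + \<beta>)) = integral {\<beta>..2*pi+\<beta>} h"
    using integral_shift_Icc_real[of 0 "2*pi" h \<beta>] by (simp add: o_def add.commute)
  also have "\<dots> = integral {\<beta>..2*pi} h + integral {2*pi..2*pi+\<beta>} h"
    using Henstock_Kurzweil_Integration.integral_combine[where f=h and a=\<beta> and c="2*pi" and b="2*pi+\<beta>"] \<beta> int by simp
  also have "integral {2*pi..2*pi+\<beta>} h = integral {0..\<beta>} (h \<circ> (+) (2*pi))"
    using integral_shift_Icc_real[of 0 \<beta> h "2*pi"] by (simp add: add.commute)
  also have "h \<circ> (+) (2*pi) = h" using per by (auto simp: add.commute)
  also have "integral {\<beta>..2*pi} h + integral {0..\<beta>} h = integral {0..2*pi} h"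
    using Henstock_Kurzweil_Integration.integral_combine[where f=h and a=0 and c=\<beta> and b="2*pi"] \<beta> int by simp
  finally show ?thesis .
qed

lemma ereal_divide_pos: "(0::real) < c \<Longrightarrow> x / ereal c = x * ereal (1/c)"
  by (simp add: divide_ereal_def divide_inverse)

lemma nat_fraction_between:
  fixes x y :: real
  assumes "0 \<le> x" "x < y"
  obtains p q :: nat where "0 < q" "x < real p / real q" "real p / real q < y"
proof -
  obtain r where r: "r \<in> \<rat>" "x < r" "r < y" using Rats_dense_in_real[OF assms(2)] by blast
  obtain p q :: nat where "q \<noteq> 0" "\<bar>r\<bar> = real p / real q" using Rats_abs_nat_div_natE[OF r(1)] by metis
  moreover have "\<bar>r\<bar> = r" using assms r by simp
  ultimately show ?thesis using r that by auto
qed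

lemma div_power_has_negative_derivative:
  fixes f :: "real \<Rightarrow> real"
  assumes f: "(f has_real_derivative D) (at t)" and t: "0 < t" and less: "t * D < real n * f t"
  shows "\<exists>E<0. ((\<lambda>t. f t / t ^ n) has_real_derivative E) (at t)"
proof -
  have "((\<lambda>t. f t / t ^ n) has_real_derivative (D * t ^ n - f t * (real n * t ^ (n - Suc 0))) / (t ^ n * t ^ n)) (at t)"
    using t by (intro DERIV_divide[OF f DERIV_pow]) simp
  moreover have "(D * t ^ n - f t * (real n * t ^ (n - Suc 0))) * t = t ^ n * (t * D - real n * f t)"
    by (cases n) (simp_all add: algebra_simps)
  then have "(D * t ^ n - f t * (real n * t ^ (n - Suc 0))) * t < 0"
    using t less by (simp add: mult_pos_neg)
  then have "(D * t ^ n - f t * (real n * t ^ (n - Suc 0))) / (t ^ n * t ^ n) < 0"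
    using t by (simp add: divide_neg_pos mult_less_0_iff)
  ultimately show ?thesis by blast
qed

definition is_smallest_minimizer :: "('a::linorder \<Rightarrow> 'b::linorder) \<Rightarrow> 'a set \<Rightarrow> 'a \<Rightarrow> bool" where
  "is_smallest_minimizer f S r \<longleftrightarrow>
     r \<in> S \<and> (\<forall>s\<in>S. f r \<le> f s) \<and> (\<forall>s\<in>S. f s = f r \<longrightarrow> r \<le> s)"

lemma is_smallest_minimizer_unique:
  assumes "is_smallest_minimizer f S r" "is_smallest_minimizer f S r'"
  shows "r = r'"
  using assms unfolding is_smallest_minimizer_def by (metis antisym)

lemma ex_smallest_minimizer:
  fixes f :: "real \<Rightarrow> 'b::linorder_topology"
  assumes cont: "continuous_on {\<delta>..K} f" and sub: "{\<delta>..K} \<subseteq> S" and r: "r \<in> {\<delta>..K}"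
    and outside: "\<And>s. s \<in> S \<Longrightarrow> s \<notin> {\<delta>..K} \<Longrightarrow> f r < f s"
  shows "\<exists>x. is_smallest_minimizer f S x"
proof -
  obtain x where x: "x \<in> {\<delta>..K}" and xmin: "\<And>y. y \<in> {\<delta>..K} \<Longrightarrow> f x \<le> f y"
    using continuous_attains_inf[OF compact_Icc _ cont] r by blast
  have fx_le: "f x \<le> f s" if "s \<in> S" for s
    using xmin[of s] xmin[OF r] outside[OF that] by (cases "s \<in> {\<delta>..K}") auto
  define M where "M = {y \<in> {\<delta>..K}. f y = f x}"
  have "closed M"
    unfolding M_def by (intro continuous_closed_preimage_constant cont closed_atLeastAtMost)
  moreover have "bounded M" by (rule bounded_subset[of "{\<delta>..K}"]) (auto simp: M_def)
  ultimately have "compact M" by (simp add: compact_eq_bounded_closed)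
  moreover have "x \<in> M" using x by (simp add: M_def)
  ultimately have "\<exists>m\<in>M. \<forall>y\<in>M. id m \<le> id y"
    by (intro continuous_attains_inf continuous_on_id) auto
  then obtain m where m: "m \<in> M" and mmin: "\<And>y. y \<in> M \<Longrightarrow> m \<le> y" by auto
  have fm: "f m = f x" using m by (simp add: M_def)
  have "m \<le> s" if s: "s \<in> S" "f s = f m" for s
  proof -
    have "s \<in> {\<delta>..K}"
    proof (rule ccontr)
      assume "s \<notin> {\<delta>..K}"
      then have "f r < f s" by (rule outside[OF s(1)])
      with s(2) fm xmin[OF r] show False by simp
    qed
    then show ?thesis using s(2) fm by (intro mmin) (simp add: M_def)
  qed
  then have "is_smallest_minimizer f S m"
    using m sub fx_le fm by (auto simp: is_smallest_minimizer_def M_def)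
  then show ?thesis ..
qed

section \<open>Integral means of a power series\<close>

context
  fixes a :: "nat \<Rightarrow> complex"
begin

lemma holomorphic_on_pser: "pser a holomorphic_on eball 0 (conv_radius a)"
  using has_field_derivative_powser[of _ a]
  by (subst holomorphic_on_open) (auto simp: pser_def[abs_def] intro!: exI)

lemma continuous_on_pser: "continuous_on (eball 0 (conv_radius a)) (pser a)"
  by (rule holomorphic_on_imp_continuous_on[OF holomorphic_on_pser])

lemma continuous_on_deriv_pser: "continuous_on (eball 0 (conv_radius a)) (deriv (pser a))"
  by (rule holomorphic_on_imp_continuous_on[OF holomorphic_deriv[OF holomorphic_on_pser]]) simp

lemma circle_in_eball:
  assumes "ereal \<bar>\<rho>\<bar> < conv_radius a"
  shows "complex_of_real \<rho> * cis \<theta> \<in> eball 0 (conv_radius a)"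
  using assms by (simp add: norm_mult)

lemma continuous_on_pser_circle:
  assumes "ereal \<bar>\<rho>\<bar> < conv_radius a"
  shows "continuous_on S (\<lambda>\<theta>. pser a (complex_of_real \<rho> * cis \<theta>))"
  by (rule continuous_on_compose2[OF continuous_on_pser])
     (auto intro!: continuous_intros circle_in_eball assms)

lemma integrable_norm_pser_circle:
  assumes "ereal \<bar>\<rho>\<bar> < conv_radius a"
  shows "(\<lambda>\<theta>. norm (pser a (complex_of_real \<rho> * cis \<theta>))) integrable_on {0..2*pi}"
  by (intro integrable_continuous_real continuous_intros continuous_on_pser_circle assms)

lemma uniform_limit_pser_circle:
  assumes "0 \<le> \<rho>" "ereal \<rho> < conv_radius a"
  shows "uniform_limit UNIV (\<lambda>N \<theta>. \<Sum>j<N. a j * (of_real \<rho> * cis \<theta>) ^ j)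
           (\<lambda>\<theta>. pser a (of_real \<rho> * cis \<theta>)) sequentially"
proof -
  have "uniform_limit (cball 0 \<rho>) (\<lambda>N z. \<Sum>j<N. a j * (z - 0) ^ j) (\<lambda>z. \<Sum>j. a j * (z - 0) ^ j) sequentially"
    by (rule powser_uniform_limit) (use assms in simp)
  from uniform_limit_compose'[OF this, of "\<lambda>\<theta>. of_real \<rho> * cis \<theta>" UNIV]
  show ?thesis using assms by (simp add: pser_def norm_mult)
qed

lemma pser_circle_has_integral_coeff:
  assumes "0 \<le> \<rho>" "ereal \<rho> < conv_radius a"
  shows "((\<lambda>\<theta>. pser a (of_real \<rho> * cis \<theta>) * cis (-(real k * \<theta>))) has_integral 2*pi * a k * of_real \<rho> ^ k)
           {0..2*pi}"
proof -
  define g where "g N \<theta> = (\<Sum>j<N. a j * (of_real \<rho> * cis \<theta>)^j) * cis (-(real k * \<theta>))" for N \<theta>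
  have bounded: "bounded ((\<lambda>\<theta>. pser a (of_real \<rho> * cis \<theta>)) ` {0..2*pi})"
    by (intro compact_imp_bounded compact_continuous_image continuous_on_pser_circle compact_Icc) (use assms in simp)
  have "uniform_limit {0..2*pi} g (\<lambda>\<theta>. pser a (of_real \<rho> * cis \<theta>) * cis (-(real k * \<theta>))) sequentially"
    unfolding g_def
    by (rule bounded_bilinear.bounded_uniform_limit[OF bounded_bilinear_mult
          uniform_limit_on_subset[OF uniform_limit_pser_circle[OF assms]] uniform_limit_const _ bounded])
       (auto intro!: boundedI[of _ 1])
  moreover have "continuous_on {0..2*pi} (g N)" for N
    unfolding g_def by (intro continuous_intros)
  ultimately obtain I J where I: "\<And>N. (g N has_integral I N) {0..2*pi}"
    and J: "((\<lambda>\<theta>. pser a (of_real \<rho> * cis \<theta>) * cis (-(real k * \<theta>))) has_integral J) {0..2*pi}"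
    and IJ: "I \<longlonglongrightarrow> J"
    by (rule uniform_limit_integral) auto
  have "I N = 2*pi * a k * of_real \<rho> ^ k" if "N > k" for N
  proof -
    have "cis \<theta> ^ j * cis (-(real k*\<theta>)) = cis (of_int (int j - int k) * \<theta>)" for j \<theta>
      by (simp only: Complex.DeMoivre cis_mult) (simp add: algebra_simps)
    then have geq: "g N \<theta> = (\<Sum>j<N. (a j * of_real \<rho> ^ j) * cis (of_int (int j - int k) * \<theta>))" for \<theta>
      unfolding g_def sum_distrib_right by (intro sum.cong refl) (simp add: power_mult_distrib mult.assoc)
    have "(g N has_integral (\<Sum>j<N. (a j * of_real \<rho> ^ j) * (if int j - int k = 0 then 2*pi else 0))) {0..2*pi}"
      unfolding geq[abs_def] by (intro has_integral_sum has_integral_mult_right has_integral_cis_int) auto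
    also have "(\<Sum>j<N. (a j * of_real \<rho> ^ j) * (if int j - int k = 0 then 2*pi else 0))
             = (\<Sum>j<N. if j = k then 2*pi * a k * of_real \<rho> ^ k else 0)"
      by (intro sum.cong refl) auto
    also have "\<dots> = 2*pi * a k * of_real \<rho> ^ k" using that by (simp add: sum.delta)
    finally show ?thesis using I[of N] has_integral_unique by blast
  qed
  then have "I \<longlonglongrightarrow> 2*pi * a k * of_real \<rho> ^ k"
    by (intro Lim_transform_eventually[OF tendsto_const]) (auto simp: eventually_at_top_linorder intro!: exI[of _ "Suc k"])
  with IJ J show ?thesis using LIMSEQ_unique by metis
qed

lemma norm_coeff_mult_power_le_M1:
  assumes "0 \<le> \<rho>" "ereal \<rho> < conv_radius a"
  shows "norm (a k) * \<rho> ^ k \<le> M1 a \<rho>"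
proof -
  have "norm (integral {0..2*pi} (\<lambda>\<theta>. pser a (of_real \<rho> * cis \<theta>) * cis (-(real k * \<theta>))))
      \<le> integral {0..2*pi} (\<lambda>\<theta>. norm (pser a (complex_of_real \<rho> * cis \<theta>)))"
    by (intro integral_norm_bound_integral integrable_norm_pser_circle integrable_continuous_real
          continuous_intros continuous_on_pser_circle)
       (use assms in \<open>auto simp: norm_mult\<close>)
  also have "integral {0..2*pi} (\<lambda>\<theta>. pser a (of_real \<rho> * cis \<theta>) * cis (-(real k * \<theta>)))
           = 2*pi * a k * of_real \<rho> ^ k"
    using pser_circle_has_integral_coeff[OF assms] by (rule integral_unique)
  finally show ?thesis
    using assms unfolding M1_def by (simp add: norm_mult norm_power field_simps)
qed

lemma M1_pos:
  assumes "a k \<noteq> 0" "0 < \<rho>" "ereal \<rho> < conv_radius a"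
  shows "0 < M1 a \<rho>"
proof -
  have "0 < norm (a k) * \<rho> ^ k" using assms by simp
  also have "\<dots> \<le> M1 a \<rho>" by (rule norm_coeff_mult_power_le_M1) (use assms in auto)
  finally show ?thesis .
qed

lemma pser_rotate_has_field_derivative:
  assumes "z * cis t \<in> eball 0 (conv_radius a)"
  shows "((\<lambda>x. pser a (x * cis t)) has_field_derivative deriv (pser a) (z * cis t) * cis t) (at z)"
proof -
  have "(pser a has_field_derivative deriv (pser a) (z * cis t)) (at (z * cis t))"
    by (rule holomorphic_derivI[OF holomorphic_on_pser open_eball assms])
  moreover have "((\<lambda>x. x * cis t) has_field_derivative cis t) (at z)"
    by (auto intro!: derivative_eq_intros)
  ultimately show ?thesis by (rule DERIV_chain2)
qed

lemma integral_norm_pser_rotate: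
  assumes "ereal (norm z) < conv_radius a"
  shows "integral {0..2*pi} (\<lambda>\<theta>. norm (pser a (z * cis \<theta>))) = 2*pi * M1 a (norm z)"
proof -
  define h where "h \<theta> = norm (pser a (of_real (norm z) * cis \<theta>))" for \<theta>
  define \<beta> where "\<beta> = (if Arg z \<ge> 0 then Arg z else Arg z + 2*pi)"
  have \<beta>: "0 \<le> \<beta>" "\<beta> \<le> 2*pi" using Arg_bounded[of z] by (auto simp: \<beta>_def)
  have "cis \<beta> = cis (Arg z)"
    by (auto simp: \<beta>_def simp flip: cis_mult)
  moreover have "z = of_real (norm z) * cis (Arg z)"
    using rcis_cmod_Arg[of z] by (simp add: rcis_def)
  ultimately have rotate: "z * cis \<theta> = of_real (norm z) * cis (\<theta> + \<beta>)" for \<theta>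
    by (metis cis_mult mult.assoc mult.commute)
  have "continuous_on UNIV h"
    unfolding h_def by (intro continuous_intros continuous_on_pser_circle) (use assms in simp)
  moreover have "h (x + 2*pi) = h x" for x
    by (simp add: h_def flip: cis_mult)
  ultimately have "integral {0..2*pi} (\<lambda>\<theta>. h (\<theta> + \<beta>)) = integral {0..2*pi} h"
    using \<beta> by (rule integral_periodic_shift)
  then show ?thesis by (simp add: rotate h_def[abs_def] M1_def)
qed

lemma isCont_M1:
  assumes "0 \<le> \<rho>0" "ereal \<rho>0 < conv_radius a"
  shows "isCont (M1 a) \<rho>0"
proof -
  obtain s where s: "ereal \<rho>0 < ereal s" "ereal s < conv_radius a"
    using ereal_dense2[OF assms(2)] by blast
  have "cball 0 s \<subseteq> eball 0 (conv_radius a)"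
    using s(2) by (auto simp: dist_norm intro: ereal_less_le)
  then have uc: "uniformly_continuous_on (cball 0 s) (pser a)"
    by (intro compact_uniformly_continuous continuous_on_subset[OF continuous_on_pser]) auto
  show ?thesis unfolding continuous_at_eps_delta
  proof (intro allI impI)
    fix e :: real assume e: "e > 0"
    then obtain d where d: "d > 0" and dd: "\<And>x x'. x \<in> cball 0 s \<Longrightarrow> x' \<in> cball 0 s \<Longrightarrow>
        dist x' x < d \<Longrightarrow> dist (pser a x') (pser a x) < e/2"
      using uc unfolding uniformly_continuous_on_def by (meson half_gt_zero)
    show "\<exists>\<delta>>0. \<forall>x'. dist x' \<rho>0 < \<delta> \<longrightarrow> dist (M1 a x') (M1 a \<rho>0) < e"
    proof (intro exI[of _ "min d (s - \<rho>0)"] conjI allI impI)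
      show "min d (s - \<rho>0) > 0" using d s by auto
      fix \<rho> assume \<rho>: "dist \<rho> \<rho>0 < min d (s - \<rho>0)"
      have r1: "\<bar>\<rho>\<bar> \<le> s" using \<rho> assms by (auto simp: dist_real_def)
      have er: "ereal \<bar>\<rho>\<bar> < conv_radius a" using s(2) r1 by (rule ereal_less_le)
      have er0: "ereal \<bar>\<rho>0\<bar> < conv_radius a" using assms by simp
      have pointwise: "\<bar>norm (pser a (of_real \<rho> * cis \<theta>)) - norm (pser a (of_real \<rho>0 * cis \<theta>))\<bar> \<le> e/2" for \<theta>
      proof -
        have "dist (of_real \<rho> * cis \<theta>) (of_real \<rho>0 * cis \<theta>) = \<bar>\<rho> - \<rho>0\<bar>"
          by (simp add: dist_norm norm_mult flip: left_diff_distrib of_real_diff)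
        then have "dist (pser a (of_real \<rho> * cis \<theta>)) (pser a (of_real \<rho>0 * cis \<theta>)) < e/2"
          using \<rho> r1 s assms by (intro dd) (auto simp: norm_mult dist_real_def)
        then show ?thesis using norm_triangle_ineq3 by (smt (verit) dist_norm)
      qed
      have "\<bar>integral {0..2*pi} (\<lambda>\<theta>. norm (pser a (of_real \<rho> * cis \<theta>)) - norm (pser a (of_real \<rho>0 * cis \<theta>)))\<bar>
           \<le> 2*pi * (e/2)"
        using integral_norm_bound_integral[OF integrable_diff[OF integrable_norm_pser_circle[OF er]
              integrable_norm_pser_circle[OF er0]] integrable_const_ivl[of "e/2"]] pointwise
        by simp
      then have "\<bar>integral {0..2*pi} (\<lambda>\<theta>. norm (pser a (of_real \<rho> * cis \<theta>)))
          - integral {0..2*pi} (\<lambda>\<theta>. norm (pser a (of_real \<rho>0 * cis \<theta>)))\<bar> \<le> 2*pi * (e/2)"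
        by (subst (asm) integral_diff) (auto intro!: integrable_norm_pser_circle er er0)
      then have "\<bar>M1 a \<rho> - M1 a \<rho>0\<bar> \<le> e/2"
        unfolding M1_def by (simp add: field_simps flip: right_diff_distrib abs_mult)
      then show "dist (M1 a \<rho>) (M1 a \<rho>0) < e" using e by (simp add: dist_real_def)
    qed
  qed
qed

lemma norm_coeff_div_power_le_M1_div_power:
  assumes "m < n" "0 < s" "ereal s < conv_radius a"
  shows "norm (a m) / s ^ (n - m) \<le> M1 a s / s ^ n"
proof -
  have "s ^ n = s ^ m * s ^ (n - m)" using assms(1) by (simp flip: power_add)
  then have "norm (a m) / s ^ (n - m) = norm (a m) * s ^ m / s ^ n" using assms(2) by simp
  also have "\<dots> \<le> M1 a s / s ^ n"
    using norm_coeff_mult_power_le_M1[of s m] assms by (intro divide_right_mono) auto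
  finally show ?thesis .
qed

end

section \<open>Weighted circle means and the maximum principle\<close>

definition weighted_circle_mean :: "(nat \<Rightarrow> complex) \<Rightarrow> (real \<Rightarrow> complex) \<Rightarrow> complex \<Rightarrow> complex" where
  "weighted_circle_mean a \<phi> z = integral (cbox 0 (2*pi)) (\<lambda>\<theta>. pser a (z * cis \<theta>) * \<phi> \<theta>) / of_real (2*pi)"

context
  fixes a :: "nat \<Rightarrow> complex"
begin

lemma holomorphic_on_weighted_circle_mean:
  assumes \<phi>: "continuous_on UNIV \<phi>"
  shows "weighted_circle_mean a \<phi> holomorphic_on eball 0 (conv_radius a)"
proof (subst holomorphic_on_open, simp, intro ballI)
  fix z :: complex assume z: "z \<in> eball 0 (conv_radius a)"
  then obtain s where s: "ereal (norm z) < ereal s" "ereal s < conv_radius a"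
    using ereal_dense2 by (metis dist_0_norm in_eball_iff)
  have rotate_in: "x * cis t \<in> eball 0 (conv_radius a)" if "x \<in> ball 0 s" for x :: complex and t :: real
    using that s(2) by (auto simp: norm_mult dist_norm) (meson ereal_less_le less_imp_le)
  have "(\<lambda>x. integral (cbox 0 (2*pi)) (\<lambda>\<theta>. pser a (x * cis \<theta>) * \<phi> \<theta>)) field_differentiable at z within ball 0 s"
  proof (rule leibniz_rule_field_differentiable[where fx = "\<lambda>x t. deriv (pser a) (x * cis t) * cis t * \<phi> t"])
    fix x :: complex and t :: real assume x: "x \<in> ball 0 s"
    show "((\<lambda>x. pser a (x * cis t) * \<phi> t) has_field_derivative deriv (pser a) (x * cis t) * cis t * \<phi> t)
        (at x within ball 0 s)"
      using pser_rotate_has_field_derivative[OF rotate_in[OF x]]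
      by (rule has_field_derivative_at_within[OF DERIV_cmult_right])
  next
    fix x :: complex assume x: "x \<in> ball 0 s"
    have "continuous_on (cbox 0 (2*pi)) (\<lambda>\<theta>. pser a (x * cis \<theta>))"
      by (rule continuous_on_compose2[OF continuous_on_pser]) (auto intro!: continuous_intros rotate_in x)
    then show "(\<lambda>\<theta>. pser a (x * cis \<theta>) * \<phi> \<theta>) integrable_on cbox 0 (2*pi)"
      by (intro integrable_continuous continuous_intros continuous_on_subset[OF \<phi>]) auto
  next
    have "continuous_on (ball 0 s \<times> cbox 0 (2*pi)) (\<lambda>p. deriv (pser a) (fst p * cis (snd p)))"
      by (rule continuous_on_compose2[OF continuous_on_deriv_pser]) (auto intro!: continuous_intros rotate_in)
    then have "continuous_on (ball 0 s \<times> cbox 0 (2*pi))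
        (\<lambda>p. deriv (pser a) (fst p * cis (snd p)) * cis (snd p) * \<phi> (snd p))"
      by (intro continuous_intros continuous_on_compose2[OF \<phi>]) auto
    then show "continuous_on (ball 0 s \<times> cbox 0 (2*pi)) (\<lambda>(x, t). deriv (pser a) (x * cis t) * cis t * \<phi> t)"
      by (simp add: split_def)
  qed (use s in auto)
  then have "(\<lambda>x. integral (cbox 0 (2*pi)) (\<lambda>\<theta>. pser a (x * cis \<theta>) * \<phi> \<theta>)) field_differentiable at z"
    using s by (simp add: at_within_open[of z "ball 0 s"])
  then have "weighted_circle_mean a \<phi> field_differentiable at z"
    unfolding weighted_circle_mean_def[abs_def]
    by (rule field_differentiable_divide[OF _ field_differentiable_const]) simp_all
  then show "\<exists>f'. (weighted_circle_mean a \<phi> has_field_derivative f') (at z)"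
    by (simp add: field_differentiable_def)
qed

lemma norm_weighted_circle_mean_le_M1:
  assumes \<phi>: "continuous_on UNIV \<phi>" "\<And>\<theta>. norm (\<phi> \<theta>) \<le> 1"
    and z: "ereal (norm z) < conv_radius a"
  shows "norm (weighted_circle_mean a \<phi> z) \<le> M1 a (norm z)"
proof -
  have f: "continuous_on UNIV (\<lambda>\<theta>. pser a (z * cis \<theta>))"
    by (rule continuous_on_compose2[OF continuous_on_pser]) (auto intro!: continuous_intros simp: norm_mult z)
  have "norm (integral {0..2*pi} (\<lambda>\<theta>. pser a (z * cis \<theta>) * \<phi> \<theta>))
           \<le> integral {0..2*pi} (\<lambda>\<theta>. norm (pser a (z * cis \<theta>)))"
    using \<phi>(2)
    by (intro integral_norm_bound_integral integrable_continuous_real continuous_intros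
          continuous_on_subset[OF f] continuous_on_subset[OF \<phi>(1)])
       (auto simp: norm_mult intro: mult_left_le)
  also have "\<dots> = 2*pi * M1 a (norm z)" by (rule integral_norm_pser_rotate[OF z])
  finally show ?thesis
    unfolding weighted_circle_mean_def by (simp add: norm_divide cbox_interval divide_le_eq mult.commute)
qed

lemma M1_le_weighted_circle_mean:
  assumes "0 < \<rho>" "ereal \<rho> < conv_radius a" "e > 0"
  obtains \<phi> where "continuous_on UNIV \<phi>" "\<And>\<theta>. norm (\<phi> \<theta>) \<le> 1"
    "M1 a \<rho> - e \<le> norm (weighted_circle_mean a \<phi> (of_real \<rho>))"
proof -
  define w where "w \<theta> = pser a (of_real \<rho> * cis \<theta>)" for \<theta>
  text \<open>\<open>\<phi>\<close> approximates the conjugate sign of \<open>w\<close>, so that \<open>w \<phi> \<approx> \<bar>w\<bar>\<close>; dividing by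
    \<open>max \<bar>w\<bar> e\<close> instead of \<open>\<bar>w\<bar>\<close> keeps it continuous at the zeros of \<open>w\<close>.\<close>
  define \<phi> where "\<phi> \<theta> = cnj (w \<theta>) / of_real (max (norm (w \<theta>)) e)" for \<theta>
  define G where "G \<theta> = (norm (w \<theta>))^2 / max (norm (w \<theta>)) e" for \<theta>
  have w: "continuous_on UNIV w"
    unfolding w_def by (rule continuous_on_pser_circle) (use assms in simp)
  have \<phi>: "continuous_on UNIV \<phi>"
    unfolding \<phi>_def using assms(3) by (intro continuous_intros w) auto
  have G: "continuous_on UNIV G"
    unfolding G_def using assms(3) by (intro continuous_intros w) auto
  have "pser a (of_real \<rho> * cis \<theta>) * \<phi> \<theta> = of_real (G \<theta>)" for \<theta>
    by (simp add: \<phi>_def G_def w_def flip: complex_norm_square of_real_power)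
  moreover have "((\<lambda>\<theta>. of_real (G \<theta>) :: complex) has_integral of_real (integral {0..2*pi} G)) {0..2*pi}"
    by (intro has_integral_of_real integrable_integral integrable_continuous_real continuous_on_subset[OF G])
       auto
  ultimately have mean_eq: "weighted_circle_mean a \<phi> (of_real \<rho>) = of_real (integral {0..2*pi} G / (2*pi))"
    unfolding weighted_circle_mean_def by (simp add: integral_unique cbox_interval)
  have "norm (w \<theta>) - e \<le> G \<theta>" for \<theta>
  proof (cases "e \<le> norm (w \<theta>)")
    case True
    then show ?thesis using assms(3) by (simp add: G_def power2_eq_square)
  next
    case False
    then have "G \<theta> = (norm (w \<theta>))^2 / e" by (simp add: G_def)
    moreover have "0 \<le> (norm (w \<theta>))^2 / e" using assms(3) by simp
    ultimately show ?thesis using False by linarith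
  qed
  then have "integral {0..2*pi} (\<lambda>\<theta>. norm (w \<theta>) - e) \<le> integral {0..2*pi} G"
    by (intro integral_le integrable_continuous_real continuous_intros continuous_on_subset[OF G]
          continuous_on_subset[OF w]) auto
  moreover have "integral {0..2*pi} (\<lambda>\<theta>. norm (w \<theta>) - e) = 2*pi * M1 a \<rho> - 2*pi*e"
    using assms(1,2) by (subst integral_diff) (auto intro!: integrable_continuous_real continuous_intros
        continuous_on_pser_circle simp: M1_def w_def)
  ultimately have "M1 a \<rho> - e \<le> integral {0..2*pi} G / (2*pi)"
    by (simp add: field_simps)
  also have "\<dots> \<le> norm (weighted_circle_mean a \<phi> (of_real \<rho>))"
    unfolding mean_eq norm_of_real by (rule abs_ge_self)
  finally have mean_ge: "M1 a \<rho> - e \<le> norm (weighted_circle_mean a \<phi> (of_real \<rho>))" .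
  have "norm (\<phi> \<theta>) \<le> 1" for \<theta>
    using assms(3) by (auto simp: \<phi>_def norm_divide)
  then show ?thesis by (rule that[OF \<phi> _ mean_ge])
qed

lemma cball_subset_eball_conv_radius:
  assumes "ereal s < conv_radius a"
  shows "cball 0 s \<subseteq> eball 0 (conv_radius a)"
  using assms by (auto simp: dist_norm) (meson ereal_less_le)

lemma M1_mono:
  assumes "0 < \<rho>" "\<rho> \<le> s" "ereal s < conv_radius a"
  shows "M1 a \<rho> \<le> M1 a s"
proof (rule field_le_epsilon)
  fix e :: real assume e: "0 < e"
  have \<rho>: "ereal \<rho> < conv_radius a" using assms(3,2) by (rule ereal_less_le)
  obtain \<phi> where \<phi>: "continuous_on UNIV \<phi>" "\<And>\<theta>. norm (\<phi> \<theta>) \<le> 1"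
    and low: "M1 a \<rho> - e \<le> norm (weighted_circle_mean a \<phi> (of_real \<rho>))"
    using M1_le_weighted_circle_mean[OF assms(1) \<rho> e] by blast
  have holo: "weighted_circle_mean a \<phi> holomorphic_on cball 0 s"
    by (rule holomorphic_on_subset[OF holomorphic_on_weighted_circle_mean[OF \<phi>(1)]
          cball_subset_eball_conv_radius[OF assms(3)]])
  have "norm (weighted_circle_mean a \<phi> (of_real \<rho>)) \<le> M1 a s"
  proof (rule maximum_modulus_frontier[where f="weighted_circle_mean a \<phi>" and \<xi>="of_real \<rho>" and S="cball 0 s"])
    show "weighted_circle_mean a \<phi> holomorphic_on interior (cball 0 s)"
      using holo by (rule holomorphic_on_subset) auto
    show "continuous_on (closure (cball 0 s)) (weighted_circle_mean a \<phi>)"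
      using holo by (auto intro: holomorphic_on_imp_continuous_on)
    show "norm (weighted_circle_mean a \<phi> z) \<le> M1 a s" if "z \<in> frontier (cball 0 s)" for z
      using that assms norm_weighted_circle_mean_le_M1[OF \<phi>, of z] by auto
  qed (use assms in auto)
  with low show "M1 a \<rho> \<le> M1 a s + e" by linarith
qed

lemma norm_weighted_circle_mean_power_ratio_le:
  assumes \<phi>: "continuous_on UNIV \<phi>" "\<And>\<theta>. norm (\<phi> \<theta>) \<le> 1"
    and r: "0 < r1" "r1 < \<rho>" "\<rho> < r2" "ereal r2 < conv_radius a"
  shows "norm (weighted_circle_mean a \<phi> (of_real \<rho>)) ^ q / \<rho> ^ p
           \<le> max (M1 a r1 ^ q / r1 ^ p) (M1 a r2 ^ q / r2 ^ p)" (is "_ \<le> ?B")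
proof -
  define F where "F = weighted_circle_mean a \<phi>"
  define S where "S = cball (0::complex) r2 - ball 0 r1"
  have S: "S \<subseteq> eball 0 (conv_radius a)"
    using cball_subset_eball_conv_radius[OF r(4)] by (auto simp: S_def)
  have hol: "(\<lambda>z. F z ^ q / z ^ p) holomorphic_on S"
    using r unfolding F_def
    by (intro holomorphic_intros holomorphic_on_subset[OF holomorphic_on_weighted_circle_mean[OF \<phi>(1)] S])
       (auto simp: S_def)
  have "closed S" unfolding S_def by (intro closed_Diff) auto
  have "norm (F (of_real \<rho>) ^ q / of_real \<rho> ^ p) \<le> ?B"
  proof (rule maximum_modulus_frontier[where f="\<lambda>z. F z ^ q / z ^ p" and \<xi>="of_real \<rho>" and S=S])
    show "(\<lambda>z. F z ^ q / z ^ p) holomorphic_on interior S"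
      using hol interior_subset by (rule holomorphic_on_subset)
    show "continuous_on (closure S) (\<lambda>z. F z ^ q / z ^ p)"
      using \<open>closed S\<close> hol by (simp add: holomorphic_on_imp_continuous_on)
    show "bounded S" unfolding S_def by (rule bounded_subset[of "cball 0 r2"]) auto
    show "norm (F z ^ q / z ^ p) \<le> ?B" if z: "z \<in> frontier S" for z
    proof -
      have zS: "z \<in> S" using z \<open>closed S\<close> by (metis Diff_iff closure_closed frontier_def)
      have "ball 0 r2 - cball 0 r1 \<subseteq> interior S"
        by (rule interior_maximal) (auto simp: S_def)
      then have "z \<notin> ball 0 r2 - cball 0 r1"
        using z by (auto simp: frontier_def)
      with zS have nz: "norm z = r1 \<or> norm z = r2" by (auto simp: S_def)
      have "norm (F z ^ q / z ^ p) = norm (F z) ^ q / norm z ^ p" by (simp add: norm_divide norm_power)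
      also have "\<dots> \<le> M1 a (norm z) ^ q / norm z ^ p"
        using norm_weighted_circle_mean_le_M1[OF \<phi>, of z] zS S
        by (intro divide_right_mono power_mono) (auto simp: F_def)
      also have "\<dots> \<le> ?B" using nz by auto
      finally show ?thesis .
    qed
    show "complex_of_real \<rho> \<in> S" using r by (auto simp: S_def)
  qed
  then show ?thesis
    using r by (simp add: F_def norm_divide norm_power)
qed

text \<open>A substitute for the log-convexity of \<open>M\<^sub>1\<close> in \<open>log r\<close>.\<close>

lemma M1_quasiconvex:
  assumes "0 < r1" "r1 < \<rho>" "\<rho> < r2" "ereal r2 < conv_radius a" "0 < M1 a \<rho>"
  shows "M1 a \<rho> ^ q / \<rho> ^ p \<le> max (M1 a r1 ^ q / r1 ^ p) (M1 a r2 ^ q / r2 ^ p)" (is "_ \<le> ?B")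
proof -
  have \<rho>: "ereal \<rho> < conv_radius a" using assms(4) less_imp_le[OF assms(3)] by (rule ereal_less_le)
  have approx: "(M1 a \<rho> - e) ^ q / \<rho> ^ p \<le> ?B" if e: "0 < e" "e < M1 a \<rho>" for e
  proof -
    obtain \<phi> where \<phi>: "continuous_on UNIV \<phi>" "\<And>\<theta>. norm (\<phi> \<theta>) \<le> 1"
      and low: "M1 a \<rho> - e \<le> norm (weighted_circle_mean a \<phi> (of_real \<rho>))"
      using M1_le_weighted_circle_mean[OF _ \<rho> e(1)] assms by auto
    have "(M1 a \<rho> - e) ^ q / \<rho> ^ p \<le> norm (weighted_circle_mean a \<phi> (of_real \<rho>)) ^ q / \<rho> ^ p"
      using low e assms by (intro divide_right_mono power_mono) auto
    also have "\<dots> \<le> ?B"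
      by (rule norm_weighted_circle_mean_power_ratio_le[OF \<phi> assms(1-4)])
    finally show ?thesis .
  qed
  have "((\<lambda>e. (M1 a \<rho> - e) ^ q / \<rho> ^ p) \<longlongrightarrow> (M1 a \<rho> - 0) ^ q / \<rho> ^ p) (at_right 0)"
    using assms by (intro tendsto_intros) auto
  moreover have "eventually (\<lambda>e. (M1 a \<rho> - e) ^ q / \<rho> ^ p \<le> ?B) (at_right 0)"
    using eventually_at_right_real[OF assms(5)] by eventually_elim (use approx in auto)
  ultimately have "(M1 a \<rho> - 0) ^ q / \<rho> ^ p \<le> ?B"
    by (rule tendsto_upperbound) simp
  then show ?thesis by simp
qed

lemma M1_tendsto_SUP:
  assumes R0: "conv_radius a = ereal R0" and "0 < R0"
  shows "((\<lambda>r. ereal (M1 a r)) \<longlongrightarrow> (SUP r\<in>{0<..<R0}. ereal (M1 a r))) (at_left R0)"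
proof (rule order_tendstoI)
  fix b assume "b < (SUP r\<in>{0<..<R0}. ereal (M1 a r))"
  then obtain r where r: "r \<in> {0<..<R0}" "b < ereal (M1 a r)" unfolding less_SUP_iff by blast
  have "eventually (\<lambda>x. x \<in> {r<..<R0}) (at_left R0)" using r by (intro eventually_at_left_real) auto
  then show "eventually (\<lambda>x. b < ereal (M1 a x)) (at_left R0)"
    by eventually_elim (use r R0 M1_mono[of r] in \<open>auto intro: less_le_trans\<close>)
next
  fix b assume b: "(SUP r\<in>{0<..<R0}. ereal (M1 a r)) < b"
  have "eventually (\<lambda>x. x \<in> {0<..<R0}) (at_left R0)"
    using \<open>0 < R0\<close> by (intro eventually_at_left_real) auto
  then show "eventually (\<lambda>x. ereal (M1 a x) < b) (at_left R0)"
  proof eventually_elim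
    case (elim x)
    then have "ereal (M1 a x) \<le> (SUP r\<in>{0<..<R0}. ereal (M1 a r))" by (intro SUP_upper) auto
    then show ?case using b by (rule le_less_trans)
  qed
qed

lemma H1norm_eq_SUP:
  assumes "conv_radius a = ereal R0" "0 < R0"
  shows "H1norm a = (SUP r\<in>{0<..<R0}. ereal (M1 a r))"
  using tendsto_Lim[OF trivial_limit_at_left_real M1_tendsto_SUP[OF assms]] assms
  by (simp add: H1norm_def)

lemma M1_tendsto_H1norm:
  assumes "conv_radius a = ereal R0" "0 < R0"
  shows "((\<lambda>r. ereal (M1 a r)) \<longlongrightarrow> H1norm a) (at_left R0)"
  using M1_tendsto_SUP[OF assms] H1norm_eq_SUP[OF assms] by simp

lemma finite_pser_zeros_cball:
  assumes "a k \<noteq> 0" "ereal s < conv_radius a"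
  shows "finite {z \<in> cball 0 s. pser a z = 0}" (is "finite ?Z")
proof (rule ccontr)
  assume inf: "infinite ?Z"
  then obtain \<xi> where \<xi>: "\<xi> \<in> cball 0 s" "\<xi> islimpt ?Z"
    using compact_eq_Bolzano_Weierstrass[of "cball (0::complex) s"] by auto
  have cb: "cball 0 s \<subseteq> eball 0 (conv_radius a)"
    by (rule cball_subset_eball_conv_radius[OF assms(2)])
  have "?Z \<subseteq> eball 0 (conv_radius a)" "\<xi> \<in> eball 0 (conv_radius a)"
    using cb \<xi>(1) by blast+
  then have zero: "pser a w = 0" if "w \<in> eball 0 (conv_radius a)" for w
    by (intro analytic_continuation[OF holomorphic_on_pser open_eball connected_eball _ _ \<xi>(2) _ that]) auto
  have "0 < s"
  proof (rule ccontr)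
    assume "\<not> 0 < s"
    have "?Z \<subseteq> {0}"
    proof
      fix z assume "z \<in> ?Z"
      then have "norm z \<le> s" by simp
      then have "norm z \<le> 0" using \<open>\<not> 0 < s\<close> by linarith
      then show "z \<in> {0}" by simp
    qed
    with inf show False using finite_subset by blast
  qed
  then have "0 < M1 a s" using M1_pos[OF assms(1) _ assms(2)] by blast
  moreover have "M1 a s = 0"
    using zero[OF circle_in_eball] assms(2) \<open>0 < s\<close> by (simp add: M1_def)
  ultimately show False by simp
qed

lemma pser_zero_free_annulus:
  assumes nz: "a k \<noteq> 0" and r0: "0 < r0" "ereal r0 < conv_radius a"
  obtains \<beta> where "r0 < \<beta>" "ereal \<beta> < conv_radius a"
    "\<And>z. r0 < norm z \<Longrightarrow> norm z < \<beta> \<Longrightarrow> pser a z \<noteq> 0"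
proof -
  obtain s where s: "ereal r0 < ereal s" "ereal s < conv_radius a"
    using ereal_dense2[OF r0(2)] by blast
  define T where "T = insert s (norm ` {z \<in> cball 0 s. pser a z = 0} \<inter> {r0<..})"
  have T: "finite T" using finite_pser_zeros_cball[OF nz s(2)] by (simp add: T_def)
  have "Min T \<in> T" using T by (rule Min_in) (simp add: T_def)
  then have "r0 < Min T" using s by (auto simp: T_def)
  moreover have "Min T \<le> s" using T by (simp add: T_def)
  then have "ereal (Min T) < conv_radius a" using s(2) by (meson ereal_less_le)
  moreover have "pser a z \<noteq> 0" if "r0 < norm z" "norm z < Min T" for z
  proof
    assume "pser a z = 0"
    with that \<open>Min T \<le> s\<close> have "norm z \<in> T" by (auto simp: T_def)
    with T have "Min T \<le> norm z" by simp
    with that show False by simp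
  qed
  ultimately show ?thesis by (rule that)
qed

lemma norm_pser_circle_has_vector_derivative:
  assumes "complex_of_real x * cis t \<in> eball 0 (conv_radius a)"
    and "pser a (complex_of_real x * cis t) \<noteq> 0"
  shows "((\<lambda>x. norm (pser a (complex_of_real x * cis t))) has_vector_derivative
      sgn (pser a (complex_of_real x * cis t)) \<bullet> (deriv (pser a) (complex_of_real x * cis t) * cis t))
      (at x within U)"
proof -
  define w where "w x = pser a (complex_of_real x * cis t)" for x
  define v where "v = deriv (pser a) (complex_of_real x * cis t) * cis t"
  have "((\<lambda>z. pser a (z * cis t)) has_field_derivative v) (at (complex_of_real x))"
    unfolding v_def by (rule pser_rotate_has_field_derivative[OF assms(1)])
  then have "(w has_vector_derivative v) (at x within U)"
    unfolding w_def by (rule has_vector_derivative_real_field)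
  moreover have "(norm has_derivative (\<lambda>h. h \<bullet> sgn (w x))) (at (w x))"
    by (rule has_derivative_norm) (use assms(2) in \<open>simp add: w_def\<close>)
  ultimately have "((\<lambda>x. norm (w x)) has_derivative (\<lambda>h. (h *\<^sub>R v) \<bullet> sgn (w x))) (at x within U)"
    unfolding has_vector_derivative_def by (rule has_derivative_compose)
  then show ?thesis
    unfolding has_vector_derivative_def w_def v_def
    by (rule has_derivative_eq_rhs) (auto simp: fun_eq_iff inner_commute)
qed

lemma M1_real_differentiable:
  assumes "0 < \<alpha>" "\<alpha> < \<rho>" "\<rho> < \<beta>" "ereal \<beta> < conv_radius a"
    and nz: "\<And>z. \<alpha> < norm z \<Longrightarrow> norm z < \<beta> \<Longrightarrow> pser a z \<noteq> 0"
  shows "\<exists>D. (M1 a has_real_derivative D) (at \<rho>)"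
proof -
  define U where "U = {\<alpha><..<\<beta>}"
  define w where "w x t = pser a (complex_of_real x * cis t)" for x t
  define fx where "fx x t = sgn (w x t) \<bullet> (deriv (pser a) (complex_of_real x * cis t) * cis t)" for x t
  have eU: "ereal \<bar>x\<bar> < conv_radius a" if "\<alpha> < x" "x < \<beta>" for x
    using that assms(1,4) by (auto simp: U_def) (meson ereal_less_le less_imp_le)
  have inU: "complex_of_real x * cis t \<in> eball 0 (conv_radius a)" if "x \<in> U" for x t
    using that eU by (intro circle_in_eball) (auto simp: U_def)
  have wnz: "w x t \<noteq> 0" if "x \<in> U" for x t
    using that nz[of "complex_of_real x * cis t"] assms by (auto simp: U_def w_def norm_mult)
  have w_cont: "continuous_on (U \<times> cbox 0 (2*pi)) (\<lambda>p. w (fst p) (snd p))"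
    unfolding w_def
    by (rule continuous_on_compose2[OF continuous_on_pser]) (auto intro!: continuous_intros inU)
  have deriv_cont: "continuous_on (U \<times> cbox 0 (2*pi))
      (\<lambda>p. deriv (pser a) (complex_of_real (fst p) * cis (snd p)) * cis (snd p))"
    by (intro continuous_intros continuous_on_compose2[OF continuous_on_deriv_pser]) (auto intro!: inU)
  have "continuous_on (U \<times> cbox 0 (2*pi)) (\<lambda>p. fx (fst p) (snd p))"
    unfolding fx_def using wnz by (intro continuous_intros w_cont deriv_cont) auto
  then have "((\<lambda>x. integral (cbox 0 (2*pi)) (\<lambda>t. norm (w x t))) has_vector_derivative
      integral (cbox 0 (2*pi)) (fx \<rho>)) (at \<rho> within U)"
    using assms(2,3) unfolding w_def fx_def
    by (intro leibniz_rule_vector_derivative norm_pser_circle_has_vector_derivative inU wnz[unfolded w_def]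
          integrable_continuous continuous_intros continuous_on_pser_circle)
       (auto simp: split_def U_def intro: eU)
  then have "((\<lambda>x. integral (cbox 0 (2*pi)) (\<lambda>t. norm (w x t))) has_real_derivative
      integral (cbox 0 (2*pi)) (fx \<rho>)) (at \<rho>)"
    using assms(2,3)
    by (simp add: U_def at_within_open[of \<rho> "{\<alpha><..<\<beta>}"] has_real_derivative_iff_has_vector_derivative)
  then have "((\<lambda>x. 1/(2*pi) * integral (cbox 0 (2*pi)) (\<lambda>t. norm (w x t))) has_real_derivative
      1/(2*pi) * integral (cbox 0 (2*pi)) (fx \<rho>)) (at \<rho>)"
    by (rule DERIV_cmult)
  moreover have "(\<lambda>x. 1/(2*pi) * integral (cbox 0 (2*pi)) (\<lambda>t. norm (w x t))) = M1 a"
    by (simp add: fun_eq_iff M1_def w_def cbox_interval)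
  ultimately show ?thesis by auto
qed

text \<open>Where \<open>\<sigma>\<close> is not differentiable, \<open>deriv\<close> returns the unspecified constant \<open>SOME D. False\<close>;
  such points contribute a bounded term to the supremum defining \<open>\<nu>\<close>.\<close>

lemma nu_finite:
  assumes R0: "conv_radius a = ereal R0"
    and bound: "\<And>r D. 0 < r \<Longrightarrow> r < R0 \<Longrightarrow> (sigma a has_real_derivative D) (at r) \<Longrightarrow> r * D \<le> c"
  shows "nu a < \<infinity>"
proof -
  define junk where "junk = (SOME D::real. False)"
  define B where "B = max c (R0 * \<bar>junk\<bar>)"
  have "r * deriv (sigma a) r \<le> B" if r: "0 < r" "r < R0" for r
  proof (cases "\<exists>D. (sigma a has_real_derivative D) (at r)")
    case True
    then obtain D where D: "(sigma a has_real_derivative D) (at r)" by blast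
    then show ?thesis using bound[OF r D] by (simp add: DERIV_imp_deriv B_def)
  next
    case False
    then have "deriv (sigma a) r = junk" unfolding deriv_def junk_def by simp
    moreover have "r * junk \<le> r * \<bar>junk\<bar>" using r by (intro mult_left_mono) auto
    moreover have "r * \<bar>junk\<bar> \<le> R0 * \<bar>junk\<bar>" using r by (intro mult_right_mono) auto
    ultimately show ?thesis by (simp add: B_def)
  qed
  then have "nu a \<le> ereal B"
    unfolding nu_def using R0 by (intro SUP_least) auto
  also have "\<dots> < \<infinity>" by simp
  finally show ?thesis .
qed

end

section \<open>Optimal radii\<close>

lemma opt_radius_eq_THE: "opt_radius a n = (THE r. is_smallest_minimizer (objective a n) (radii a) r)"
  by (simp add: opt_radius_def is_smallest_minimizer_def)

locale nonpolynomial_pser =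
  fixes a :: "nat \<Rightarrow> complex"
  assumes conv_radius_pos: "conv_radius a > 0"
    and infinite_support: "infinite {k. a k \<noteq> 0}"
begin

lemma ex_nonzero_coeff: "\<exists>m. a m \<noteq> 0"
  using infinite_support by (metis (mono_tags, lifting) empty_Collect_eq finite.emptyI)

lemma M1_pos_inside: "0 < r \<Longrightarrow> ereal r < conv_radius a \<Longrightarrow> 0 < M1 a r"
  using ex_nonzero_coeff M1_pos by blast

lemma objective_inside: "ereal r < conv_radius a \<Longrightarrow> objective a n r = ereal (M1 a r / r ^ n)"
  by (simp add: objective_def)

lemma objective_conv_radius: "conv_radius a = ereal R0 \<Longrightarrow> objective a n R0 = H1norm a / ereal (R0 ^ n)"
  by (simp add: objective_def)

lemma radii_cases:
  assumes "r \<in> radii a"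
  obtains "0 < r" "ereal r < conv_radius a" | "0 < r" "conv_radius a = ereal r"
  using assms by (auto simp: radii_def le_less)

lemma M1_le_H1norm:
  assumes "conv_radius a = ereal R0" "0 < r" "r < R0"
  shows "ereal (M1 a r) \<le> H1norm a"
  using assms H1norm_eq_SUP[OF assms(1)] by (auto intro: SUP_upper)

lemma H1norm_pos:
  assumes "conv_radius a = ereal R0"
  shows "0 < H1norm a"
proof -
  have "0 < R0" using assms conv_radius_pos by simp
  then have "0 < ereal (M1 a (R0/2))" using M1_pos_inside[of "R0/2"] assms by simp
  also have "\<dots> \<le> H1norm a" using M1_le_H1norm[OF assms] \<open>0 < R0\<close> by simp
  finally show ?thesis .
qed

lemma objective_pos: "r \<in> radii a \<Longrightarrow> 0 < objective a n r"
proof (elim radii_cases)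
  assume "0 < r" "ereal r < conv_radius a"
  then show ?thesis using M1_pos_inside[of r] by (simp add: objective_inside)
next
  assume r: "0 < r" and R: "conv_radius a = ereal r"
  show ?thesis unfolding objective_conv_radius[OF R] ereal_divide_pos[OF zero_less_power[OF r]]
    using H1norm_pos[OF R] r by (simp add: ereal_zero_less_0_iff)
qed

lemma objective_Suc: "r \<in> radii a \<Longrightarrow> objective a (Suc n) r = objective a n r * ereal (1/r)"
proof (elim radii_cases)
  assume "0 < r" "ereal r < conv_radius a"
  then show ?thesis by (simp add: objective_inside field_simps)
next
  assume r: "0 < r" and R: "conv_radius a = ereal r"
  show ?thesis unfolding objective_conv_radius[OF R] ereal_divide_pos[OF zero_less_power[OF r]]
    by (simp add: mult.assoc field_simps)
qed

lemma isCont_objective_inside: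
  assumes x: "0 < x" "ereal x < conv_radius a"
  shows "isCont (objective a n) x"
proof -
  obtain e where e: "e > 0" "\<And>y. dist y x < e \<Longrightarrow> ereal y < conv_radius a"
  proof (cases "conv_radius a")
    case (real R0)
    show ?thesis by (rule that[of "R0 - x"]) (use x real in \<open>auto simp: dist_real_def\<close>)
  next
    case PInf
    show ?thesis by (rule that[of 1]) (use PInf in auto)
  qed (use conv_radius_pos in simp)
  have "((\<lambda>y. M1 a y / y ^ n) \<longlongrightarrow> M1 a x / x ^ n) (at x)"
    using x by (intro tendsto_intros isCont_tendsto_compose[OF isCont_M1]) auto
  then have "((\<lambda>y. ereal (M1 a y / y ^ n)) \<longlongrightarrow> objective a n x) (at x)"
    unfolding objective_inside[OF x(2)] by (rule tendsto_ereal)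
  moreover have "eventually (\<lambda>y. ereal (M1 a y / y ^ n) = objective a n y) (at x)"
    unfolding eventually_at using e by (intro exI[of _ e]) (auto simp: objective_inside)
  ultimately show ?thesis
    unfolding isCont_def by (rule Lim_transform_eventually)
qed

lemma objective_tendsto_conv_radius:
  assumes R: "conv_radius a = ereal R0"
  shows "(objective a n \<longlongrightarrow> objective a n R0) (at_left R0)"
proof -
  have R0: "0 < R0" using R conv_radius_pos by simp
  have "((\<lambda>y. ereal (M1 a y) * ereal (1 / y ^ n)) \<longlongrightarrow> H1norm a * ereal (1 / R0 ^ n)) (at_left R0)"
    by (intro tendsto_mult_ereal M1_tendsto_H1norm[OF R R0] tendsto_intros) (use R0 in auto)
  moreover have "eventually (\<lambda>y. ereal (M1 a y) * ereal (1 / y ^ n) = objective a n y) (at_left R0)"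
    using eventually_at_left_real[OF R0] by eventually_elim (auto simp: objective_inside R)
  ultimately show ?thesis
    unfolding objective_conv_radius[OF R] ereal_divide_pos[OF zero_less_power[OF R0]]
    by (rule Lim_transform_eventually)
qed

lemma continuous_on_objective:
  assumes "0 < \<delta>" "{\<delta>..K} \<subseteq> radii a"
  shows "continuous_on {\<delta>..K} (objective a n)"
proof (subst continuous_on_eq_continuous_within, intro ballI)
  fix x assume x: "x \<in> {\<delta>..K}"
  then have "x \<in> radii a" using assms by auto
  then show "continuous (at x within {\<delta>..K}) (objective a n)"
  proof (cases rule: radii_cases)
    case 1
    then show ?thesis using isCont_objective_inside continuous_at_imp_continuous_at_within by blast
  next
    case 2
    have "K \<in> radii a" using x assms(2) by auto
    then have "K \<le> x" using 2 by (simp add: radii_def)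
    then have "at x within {\<delta>..K} \<le> at_left x"
      unfolding at_within_def by (intro inf_mono order_refl) auto
    then show ?thesis
      unfolding continuous_within using objective_tendsto_conv_radius[OF 2(2)] by (rule tendsto_mono)
  qed
qed

lemma objective_gt_near_zero:
  assumes "a m \<noteq> 0" "m < n"
  obtains \<delta> where "0 < \<delta>" "ereal \<delta> < conv_radius a" "\<And>s. 0 < s \<Longrightarrow> s < \<delta> \<Longrightarrow> ereal C < objective a n s"
proof -
  obtain r1 where r1: "0 < ereal r1" "ereal r1 < conv_radius a"
    using ereal_dense2[OF conv_radius_pos] by blast
  define c where "c = norm (a m)"
  have c: "0 < c" using assms(1) by (simp add: c_def)
  define \<delta> where "\<delta> = min r1 (min 1 (c / (\<bar>C\<bar> + 1)))"
  have \<delta>: "0 < \<delta>" "\<delta> \<le> r1" using r1 c by (auto simp: \<delta>_def)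
  show ?thesis
  proof (rule that)
    show "ereal \<delta> < conv_radius a" using r1(2) \<delta>(2) by (rule ereal_less_le)
    fix s assume s: "0 < s" "s < \<delta>"
    have sR: "ereal s < conv_radius a" using r1(2) \<delta>(2) s(2) by (meson ereal_less_le less_le_trans less_imp_le)
    have "C < c / s"
    proof -
      have "s < c / (\<bar>C\<bar> + 1)" using s by (simp add: \<delta>_def)
      then have "s * \<bar>C\<bar> + s < c" by (simp add: pos_less_divide_eq distrib_left)
      moreover have "s * C \<le> s * \<bar>C\<bar>" using s by (intro mult_left_mono) auto
      ultimately have "s * C < c" using s(1) by linarith
      then show ?thesis using s by (simp add: pos_less_divide_eq mult.commute)
    qed
    also have "\<dots> \<le> c / s ^ (n - m)"
      using s assms(2) c by (intro divide_left_mono power_decreasing[of 1, simplified]) (auto simp: \<delta>_def)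
    also have "\<dots> \<le> M1 a s / s ^ n"
      unfolding c_def by (rule norm_coeff_div_power_le_M1_div_power[OF assms(2) s(1) sR])
    finally show "ereal C < objective a n s" by (simp add: objective_inside[OF sR])
  qed (use \<delta> in auto)
qed

lemma objective_gt_near_infinity:
  assumes "conv_radius a = \<infinity>"
  obtains K where "\<And>s. K < s \<Longrightarrow> ereal C < objective a n s"
proof -
  obtain k where k: "k > n" "a k \<noteq> 0"
    using infinite_support by (auto simp: infinite_nat_iff_unbounded)
  define d where "d = norm (a k)"
  have d: "0 < d" using k by (simp add: d_def)
  show ?thesis
  proof (rule that[of "max 1 (\<bar>C\<bar> / d)"])
    fix s assume "max 1 (\<bar>C\<bar> / d) < s"
    then have s: "1 < s" "\<bar>C\<bar> < d * s" using d by (auto simp: field_simps)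
    have "C < d * s" using s by linarith
    also have "\<dots> \<le> d * s ^ (k - n)"
      using s k d by (intro mult_left_mono power_increasing[of 1, simplified]) auto
    also have "\<dots> \<le> M1 a s / s ^ n"
    proof -
      have "s ^ k = s ^ n * s ^ (k - n)" using k by (simp flip: power_add)
      moreover have "d * s ^ k \<le> M1 a s"
        unfolding d_def by (rule norm_coeff_mult_power_le_M1) (use s assms in auto)
      ultimately show ?thesis using s by (simp add: field_simps)
    qed
    finally show "ereal C < objective a n s" by (simp add: objective_inside assms)
  qed
qed

lemma ex_smallest_minimizer_objective:
  assumes "a m \<noteq> 0" "m < n"
  shows "\<exists>r. is_smallest_minimizer (objective a n) (radii a) r"
proof -
  obtain r1 where r1: "0 < ereal r1" "ereal r1 < conv_radius a"
    using ereal_dense2[OF conv_radius_pos] by blast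
  have "0 < r1" using r1(1) by simp
  define C where "C = M1 a r1 / r1 ^ n"
  have C: "objective a n r1 = ereal C" unfolding C_def using r1(2) by (rule objective_inside)
  obtain \<delta> where \<delta>: "0 < \<delta>" "ereal \<delta> < conv_radius a"
    and small: "\<And>s. 0 < s \<Longrightarrow> s < \<delta> \<Longrightarrow> ereal C < objective a n s"
    using objective_gt_near_zero[OF assms] by blast
  obtain K where K: "{min \<delta> r1..K} \<subseteq> radii a" "r1 \<le> K"
    and large: "\<And>s. s \<in> radii a \<Longrightarrow> K < s \<Longrightarrow> ereal C < objective a n s"
  proof (cases "conv_radius a")
    case (real R0)
    show ?thesis
    proof (rule that[of R0])
      show "{min \<delta> r1..R0} \<subseteq> radii a" using \<open>0 < r1\<close> \<delta> real by (auto simp: radii_def)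
      show "r1 \<le> R0" using r1 real by simp
    qed (use real in \<open>simp add: radii_def\<close>)
  next
    case PInf
    obtain K where "\<And>s. K < s \<Longrightarrow> ereal C < objective a n s"
      using objective_gt_near_infinity[OF PInf] by blast
    then show ?thesis by (intro that[of "max K r1"]) (use \<open>0 < r1\<close> \<delta> PInf in \<open>auto simp: radii_def\<close>)
  qed (use conv_radius_pos in simp)
  show ?thesis
  proof (rule ex_smallest_minimizer[OF continuous_on_objective[OF _ K(1)] K(1)])
    show "r1 \<in> {min \<delta> r1..K}" using K(2) by simp
    show "objective a n r1 < objective a n s" if "s \<in> radii a" "s \<notin> {min \<delta> r1..K}" for s
      using that small large C by (auto simp: radii_def not_le)
  qed (use \<delta> r1 in simp)
qed

lemma opt_radius_smallest_minimizer:
  assumes "a m \<noteq> 0" "m < n"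
  shows "is_smallest_minimizer (objective a n) (radii a) (opt_radius a n)"
  using ex_smallest_minimizer_objective[OF assms] is_smallest_minimizer_unique
  unfolding opt_radius_eq_THE by (metis theI)

lemma
  assumes "a m \<noteq> 0" "m < n"
  shows opt_radius_radii: "opt_radius a n \<in> radii a"
    and objective_opt_radius_le: "s \<in> radii a \<Longrightarrow> objective a n (opt_radius a n) \<le> objective a n s"
    and opt_radius_le_eq: "s \<in> radii a \<Longrightarrow> objective a n s = objective a n (opt_radius a n) \<Longrightarrow>
          opt_radius a n \<le> s"
  using opt_radius_smallest_minimizer[OF assms] by (auto simp: is_smallest_minimizer_def)

lemma opt_radius_pos: "a m \<noteq> 0 \<Longrightarrow> m < n \<Longrightarrow> 0 < opt_radius a n"
  using opt_radius_radii by (simp add: radii_def)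

lemma opt_radius_mono:
  assumes am: "a m \<noteq> 0" and mn: "m < n"
  shows "opt_radius a n \<le> opt_radius a (Suc n)"
proof (rule ccontr)
  define r where "r = opt_radius a n"
  define s where "s = opt_radius a (Suc n)"
  assume "\<not> opt_radius a n \<le> opt_radius a (Suc n)"
  then have sr: "s < r" by (simp add: r_def s_def)
  have mn': "m < Suc n" using mn by simp
  have rR: "r \<in> radii a" and sR: "s \<in> radii a"
    unfolding r_def s_def using opt_radius_radii[OF am mn] opt_radius_radii[OF am mn'] .
  have lt: "objective a n r < objective a n s"
    using objective_opt_radius_le[OF am mn sR] opt_radius_le_eq[OF am mn sR] sr
    by (auto simp: r_def order.strict_iff_order)
  have s0: "0 < s" using sR by (simp add: radii_def)
  have r0: "0 < r" using rR by (simp add: radii_def)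
  have s1: "ereal s < conv_radius a" using rR sr by (auto simp: radii_def intro: ereal_le_less)
  define B where "B = M1 a s / s ^ n"
  have B: "0 < B" unfolding B_def using M1_pos_inside[OF s0 s1] s0 by simp
  have Os: "objective a n s = ereal B" unfolding B_def by (rule objective_inside[OF s1])
  obtain A where OA: "objective a n r = ereal A"
    using lt objective_pos[OF rR, of n] Os by (cases "objective a n r") auto
  have AB: "A < B" using lt Os OA by simp
  have "objective a (Suc n) s \<le> objective a (Suc n) r"
    using objective_opt_radius_le[OF am mn' rR] by (simp add: s_def)
  then have "B / s \<le> A / r"
    unfolding objective_Suc[OF sR] objective_Suc[OF rR] Os OA by simp
  also have "A / r < B / r" using AB r0 by (simp add: divide_strict_right_mono)
  finally have "B / s < B / r" .
  then have "r < s" using B s0 r0 by (simp add: field_simps)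
  with sr show False by simp
qed

text \<open>For \<open>x \<le> r\<^sub>0\<close> the Cauchy estimate bounds the objective below by \<open>\<bar>a\<^sub>m\<bar> r\<^sub>0\<^sup>m\<^sup>-\<^sup>n\<close>, which
  eventually exceeds its value \<open>M\<^sub>1(r\<^sub>1) / r\<^sub>1\<^sup>n\<close> at any \<open>r\<^sub>1 > r\<^sub>0\<close>, as \<open>(r\<^sub>1/r\<^sub>0)\<^sup>n \<rightarrow> \<infinity>\<close>.\<close>

lemma eventually_opt_radius_gt:
  assumes am: "a m \<noteq> 0" and r0: "0 < r0" "ereal r0 < conv_radius a"
  shows "eventually (\<lambda>n. r0 < opt_radius a n) sequentially"
proof -
  obtain r1 where r1: "ereal r0 < ereal r1" "ereal r1 < conv_radius a"
    using ereal_dense2[OF r0(2)] by blast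
  have r01: "r0 < r1" and r1pos: "0 < r1" using r1 r0 by auto
  define c where "c = norm (a m)"
  have c: "0 < c" using am by (simp add: c_def)
  define M where "M = M1 a r1"
  have "eventually (\<lambda>n. M / (c * r0 ^ m) < (r1 / r0) ^ n) sequentially"
    by (rule Archimedean_eventually_pow) (use r0 r01 in simp)
  moreover have "eventually (\<lambda>n. m < n) sequentially" by (rule eventually_gt_at_top)
  ultimately show ?thesis
  proof eventually_elim
    case (elim n)
    show ?case
    proof (rule ccontr)
      define x where "x = opt_radius a n"
      assume "\<not> r0 < opt_radius a n"
      then have xr0: "x \<le> r0" by (simp add: x_def)
      have x0: "0 < x" unfolding x_def by (rule opt_radius_pos[OF am elim(2)])
      have xR: "ereal x < conv_radius a" using r0(2) xr0 by (rule ereal_less_le)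
      have "r1 \<in> radii a" using r1 r1pos by (simp add: radii_def)
      then have "objective a n x \<le> objective a n r1"
        unfolding x_def by (rule objective_opt_radius_le[OF am elim(2)])
      then have le: "M1 a x / x ^ n \<le> M / r1 ^ n"
        unfolding objective_inside[OF xR] objective_inside[OF r1(2)] M_def by simp
      have "c / r0 ^ (n - m) \<le> c / x ^ (n - m)"
        using x0 xr0 c by (intro divide_left_mono power_mono mult_pos_pos) auto
      also have "\<dots> \<le> M1 a x / x ^ n"
        unfolding c_def by (rule norm_coeff_div_power_le_M1_div_power[OF elim(2) x0 xR])
      finally have "c / r0 ^ (n - m) \<le> M / r1 ^ n" using le by simp
      then have A: "c * r1 ^ n \<le> M * r0 ^ (n - m)" using r0 r01 by (simp add: field_simps)
      have rn: "r0 ^ n = r0 ^ m * r0 ^ (n - m)" using elim(2) by (simp flip: power_add)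
      from elim(1) have "M / (c * r0 ^ m) < r1 ^ n / r0 ^ n" by (simp add: power_divide)
      then have "M * r0 ^ n < c * r0 ^ m * r1 ^ n" using r0 c by (simp add: field_simps)
      then have "r0 ^ m * (M * r0 ^ (n - m)) < r0 ^ m * (c * r1 ^ n)"
        unfolding rn by (simp add: algebra_simps)
      then have "M * r0 ^ (n - m) < c * r1 ^ n" using r0 by (simp add: mult_less_cancel_left_pos)
      with A show False by simp
    qed
  qed
qed

lemma opt_radius_tendsto:
  assumes am: "a m \<noteq> 0"
  shows "(\<lambda>n. ereal (opt_radius a n)) \<longlonglongrightarrow> conv_radius a"
proof (rule order_tendstoI)
  fix b assume b: "b < conv_radius a"
  show "eventually (\<lambda>n. b < ereal (opt_radius a n)) sequentially"
  proof (cases "b \<le> 0")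
    case True
    have "eventually (\<lambda>n. m < n) sequentially" by (rule eventually_gt_at_top)
    then show ?thesis
      by eventually_elim (use True opt_radius_pos[OF am] in \<open>auto intro: le_less_trans\<close>)
  next
    case False
    then obtain b' where b': "b = ereal b'" "0 < b'" using b by (cases b) auto
    show ?thesis using eventually_opt_radius_gt[OF am b'(2)] b b' by simp
  qed
next
  fix b assume b: "conv_radius a < b"
  have "eventually (\<lambda>n. m < n) sequentially" by (rule eventually_gt_at_top)
  then show "eventually (\<lambda>n. ereal (opt_radius a n) < b) sequentially"
    by eventually_elim (use b opt_radius_radii[OF am] in \<open>auto simp: radii_def intro: le_less_trans\<close>)
qed

lemma M1_power_ratio_eventually_less:
  assumes R0: "conv_radius a = ereal R0"
    and minR: "\<And>s. s \<in> radii a \<Longrightarrow> objective a n R0 \<le> objective a n s"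
    and H: "H1norm a = ereal H"
    and r0: "0 < r0" "r0 < R0"
    and np: "real n * real q < real p"
  shows "eventually (\<lambda>r. M1 a r ^ q / r ^ p < M1 a r0 ^ q / r0 ^ p) (at_left R0)"
proof -
  have R0pos: "0 < R0" using r0 by simp
  have r0R: "ereal r0 < conv_radius a" using R0 r0 by simp
  have M0: "0 < M1 a r0" by (rule M1_pos_inside[OF r0(1) r0R])
  have Hpos: "0 < H" using H1norm_pos[OF R0] H by simp
  have "r0 \<in> radii a" using r0 R0 by (simp add: radii_def)
  from minR[OF this] have "H / R0 ^ n \<le> M1 a r0 / r0 ^ n"
    unfolding objective_conv_radius[OF R0] objective_inside[OF r0R] H
    using R0pos by (simp add: ereal_divide_pos)
  define k where "k = p - n * q"
  have k: "0 < k" and pk: "p = n * q + k"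
    using np unfolding k_def by (simp_all flip: of_nat_mult)
  have "H ^ q / R0 ^ p = (H / R0 ^ n) ^ q / R0 ^ k"
    unfolding pk by (simp add: power_add power_mult power_divide field_simps)
  also have "\<dots> \<le> (M1 a r0 / r0 ^ n) ^ q / R0 ^ k"
    using \<open>H / R0 ^ n \<le> M1 a r0 / r0 ^ n\<close> Hpos R0pos by (intro divide_right_mono power_mono) auto
  also have "\<dots> < (M1 a r0 / r0 ^ n) ^ q / r0 ^ k"
    using M0 r0 k by (intro divide_strict_left_mono power_strict_mono zero_less_power mult_pos_pos) auto
  also have "\<dots> = M1 a r0 ^ q / r0 ^ p"
    unfolding pk by (simp add: power_add power_mult power_divide field_simps)
  finally have lim_less: "H ^ q / R0 ^ p < M1 a r0 ^ q / r0 ^ p" .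
  have "(M1 a \<longlongrightarrow> H) (at_left R0)"
    using M1_tendsto_H1norm[OF R0 R0pos] H by simp
  then have "((\<lambda>r. M1 a r ^ q / r ^ p) \<longlongrightarrow> H ^ q / R0 ^ p) (at_left R0)"
    using R0pos by (intro tendsto_intros) auto
  then show ?thesis using lim_less by (rule order_tendstoD(2))
qed

text \<open>If \<open>r\<sigma>'(r) > n\<close> at some \<open>r\<^sub>0 < R\<close>, pick \<open>n < p/q < r\<^sub>0\<sigma>'(r\<^sub>0)\<close>. Then \<open>G = M\<^sub>1\<^sup>q / r\<^sup>p\<close> is smaller than
  \<open>G(r\<^sub>0)\<close> just left of \<open>r\<^sub>0\<close> (as \<open>log G\<close> is increasing there) and near \<open>R\<close> (as \<open>R\<close> minimises the
  objective), contradicting the quasi-convexity of \<open>G\<close>.\<close>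

lemma r_mult_deriv_sigma_le:
  assumes R0: "conv_radius a = ereal R0"
    and minR: "\<And>s. s \<in> radii a \<Longrightarrow> objective a n R0 \<le> objective a n s"
    and H: "H1norm a = ereal H"
    and r0: "0 < r0" "r0 < R0"
    and D: "(sigma a has_real_derivative D) (at r0)"
  shows "r0 * D \<le> real n"
proof (rule ccontr)
  assume "\<not> r0 * D \<le> real n"
  then obtain p q :: nat where q: "0 < q" and np: "real n < real p / real q"
    and pD: "real p / real q < r0 * D"
    by (metis nat_fraction_between not_le of_nat_0_le_iff)
  have np': "real n * real q < real p" using np q by (simp add: field_simps)
  define G where "G r = M1 a r ^ q / r ^ p" for r
  have G_pos: "0 < G r" if "0 < r" "r < R0" for r
    unfolding G_def using M1_pos_inside[OF that(1)] that R0 by simp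
  define h where "h r = real q * sigma a r - real p * ln r" for r
  have h_eq: "h r = ln (G r)" if "0 < r" "r < R0" for r
    using M1_pos_inside[OF that(1)] that R0 by (simp add: h_def G_def sigma_def ln_div ln_realpow)
  have "(h has_real_derivative real q * D - real p * (1 / r0)) (at r0)"
    unfolding h_def[abs_def] by (intro DERIV_diff DERIV_cmult D DERIV_ln_divide r0)
  moreover have "0 < real q * D - real p * (1 / r0)"
    using pD q r0 by (simp add: field_simps)
  ultimately obtain d where d: "d > 0" "\<And>t. t > 0 \<Longrightarrow> t < d \<Longrightarrow> h (r0 - t) < h r0"
    using DERIV_pos_inc_left by blast
  define r1 where "r1 = r0 - min (d/2) (r0/2)"
  have r1: "0 < r1" "r1 < r0" using d r0 by (auto simp: r1_def)
  have "h r1 < h r0" unfolding r1_def using d r0 by (intro d(2)) auto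
  then have G1: "G r1 < G r0"
    using h_eq[of r1] h_eq[of r0] G_pos[of r1] G_pos[of r0] r1 r0 by simp
  have "eventually (\<lambda>r. G r < G r0) (at_left R0)"
    unfolding G_def by (rule M1_power_ratio_eventually_less[OF R0 minR H r0 np'])
  then have "eventually (\<lambda>r. G r < G r0 \<and> r \<in> {r0<..<R0}) (at_left R0)"
    using eventually_at_left_real[OF r0(2)] by (rule eventually_conj)
  then obtain r2 where r2: "G r2 < G r0" "r0 < r2" "r2 < R0"
    using eventually_happens'[OF trivial_limit_at_left_real] by auto
  have "G r0 \<le> max (G r1) (G r2)"
    unfolding G_def using r1 r2 R0 M1_pos_inside[OF r0(1)] r0 by (intro M1_quasiconvex) auto
  with G1 r2(1) show False by simp
qed

lemma opt_radius_conv_radius_finite: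
  assumes am: "a m \<noteq> 0" and mn: "m < n" and eq: "ereal (opt_radius a n) = conv_radius a"
  shows "conv_radius a < \<infinity> \<and> H1norm a < \<infinity> \<and> nu a < \<infinity>"
proof -
  define R0 where "R0 = opt_radius a n"
  have R0: "conv_radius a = ereal R0" using eq by (simp add: R0_def)
  have R0pos: "0 < R0" unfolding R0_def by (rule opt_radius_pos[OF am mn])
  have minR: "objective a n R0 \<le> objective a n s" if "s \<in> radii a" for s
    unfolding R0_def by (rule objective_opt_radius_le[OF am mn that])
  have "R0/2 \<in> radii a" using R0pos R0 by (simp add: radii_def)
  from minR[OF this] have "H1norm a * ereal (1 / R0 ^ n) \<le> ereal (M1 a (R0/2) / (R0/2) ^ n)"
    unfolding objective_conv_radius[OF R0] using R0pos R0
    by (simp add: ereal_divide_pos objective_inside)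
  then have Hfin: "H1norm a < \<infinity>"
    using R0pos by (cases "H1norm a") auto
  then obtain H where H: "H1norm a = ereal H" using H1norm_pos[OF R0] by (cases "H1norm a") auto
  have "nu a < \<infinity>"
    by (rule nu_finite[OF R0 r_mult_deriv_sigma_le[OF R0 minR H]]) auto
  with Hfin R0 show ?thesis by simp
qed

lemma M1_div_power_decreasing:
  assumes nu: "nu a < ereal (real n)"
    and xy: "0 < x" "x < y" "y < \<beta>" "ereal \<beta> < conv_radius a"
    and zero_free: "\<And>z. x < norm z \<Longrightarrow> norm z < \<beta> \<Longrightarrow> pser a z \<noteq> 0"
  shows "M1 a y / y ^ n < M1 a x / x ^ n"
proof -
  have tR: "ereal t < conv_radius a" if "t \<le> y" for t
    using xy(4) that xy(3) by (meson ereal_less_le less_imp_le order_trans)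
  define g where "g t = M1 a t / t ^ n" for t
  have "g y < g x"
  proof (rule DERIV_neg_imp_decreasing_open[OF xy(2)])
    fix t assume t: "x < t" "t < y"
    have t0: "0 < t" using t xy by simp
    obtain D where D: "(M1 a has_real_derivative D) (at t)"
      using M1_real_differentiable[OF xy(1) t(1) _ xy(4) zero_free] t xy by auto
    have Mt: "0 < M1 a t" using M1_pos_inside[OF t0 tR] t by simp
    have "(sigma a has_real_derivative 1 / M1 a t * D) (at t)"
      unfolding sigma_def[abs_def] by (rule DERIV_chain2[OF DERIV_ln_divide[OF Mt] D])
    then have "ereal (t * (D / M1 a t)) \<le> nu a"
      unfolding nu_def using t0 tR t by (intro SUP_upper2[of t]) (auto simp: DERIV_imp_deriv)
    then have "ereal (t * (D / M1 a t)) < ereal (real n)" using nu by (rule le_less_trans)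
    then have "t * D < real n * M1 a t" using Mt by (simp add: field_simps)
    then show "\<exists>E. (g has_real_derivative E) (at t) \<and> E < 0"
      unfolding g_def[abs_def] using div_power_has_negative_derivative[OF D t0] by blast
  next
    show "continuous_on {x..y} g"
      unfolding g_def using xy(1) tR
      by (intro continuous_at_imp_continuous_on ballI continuous_intros isCont_M1) auto
  qed
  then show ?thesis by (simp add: g_def)
qed

lemma opt_radius_eq_conv_radius:
  assumes am: "a m \<noteq> 0" and mn: "m < n" and nu: "nu a < ereal (real n)"
  shows "ereal (opt_radius a n) = conv_radius a"
proof (rule ccontr)
  define x where "x = opt_radius a n"
  assume "ereal (opt_radius a n) \<noteq> conv_radius a"
  then have xR: "ereal x < conv_radius a"
    using opt_radius_radii[OF am mn] by (auto simp: radii_def x_def)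
  have x0: "0 < x" unfolding x_def by (rule opt_radius_pos[OF am mn])
  obtain \<beta> where \<beta>: "x < \<beta>" "ereal \<beta> < conv_radius a"
    and zero_free: "\<And>z. x < norm z \<Longrightarrow> norm z < \<beta> \<Longrightarrow> pser a z \<noteq> 0"
    using pser_zero_free_annulus[OF am x0 xR] by blast
  define y where "y = (x + \<beta>) / 2"
  have y: "x < y" "y < \<beta>" using \<beta> by (auto simp: y_def)
  have yR: "ereal y < conv_radius a" using \<beta>(2) y(2) by (meson ereal_less_le less_imp_le)
  have "M1 a y / y ^ n < M1 a x / x ^ n"
    by (rule M1_div_power_decreasing[OF nu x0 y \<beta>(2) zero_free])
  moreover have "y \<in> radii a" using y x0 yR by (simp add: radii_def less_imp_le)
  then have "objective a n x \<le> objective a n y"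
    unfolding x_def by (rule objective_opt_radius_le[OF am mn])
  then have "M1 a x / x ^ n \<le> M1 a y / y ^ n"
    unfolding objective_inside[OF xR] objective_inside[OF yR] by simp
  ultimately show False by simp
qed

end

theorem theorem4p6:
  fixes a :: "nat \<Rightarrow> complex"
  assumes Rpos: "conv_radius a > 0"
    and notpoly: "infinite {k. a k \<noteq> 0}"
  defines "n0 \<equiv> (LEAST k. a k \<noteq> 0)"
  shows "(\<forall>n>n0. opt_radius a n \<le> opt_radius a (Suc n))
    \<and> ((\<lambda>n. ereal (opt_radius a n)) \<longlonglongrightarrow> conv_radius a)
    \<and> (\<forall>n>n0. ereal (opt_radius a n) = conv_radius a \<longrightarrow>
          conv_radius a < \<infinity> \<and> H1norm a < \<infinity> \<and> nu a < \<infinity>)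
    \<and> (\<forall>n>n0. conv_radius a < \<infinity> \<and> H1norm a < \<infinity> \<and> nu a < ereal (real n) \<longrightarrow>
          ereal (opt_radius a n) = conv_radius a)"
proof -
  interpret nonpolynomial_pser a using Rpos notpoly by unfold_locales
  have an0: "a n0 \<noteq> 0" unfolding n0_def using ex_nonzero_coeff by (rule LeastI_ex)
  text \<open>In the last clause only \<open>\<nu> < n\<close> is needed; \<open>R < \<infinity>\<close> and \<open>\<parallel>f\<parallel> < \<infinity>\<close> are then automatic.\<close>
  show ?thesis
    using opt_radius_mono[OF an0] opt_radius_tendsto[OF an0]
      opt_radius_conv_radius_finite[OF an0] opt_radius_eq_conv_radius[OF an0]
    by blast
qed

end
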